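(* Let $Y\in[M]$ be categorical and suppose the central subspace of $Y$ given $X$ exists, with dimension $d^*_{\rm CS}$ and basis matrix $B\in\mathbb{R}^{p\times d^*_{\rm CS}}$; take $R^*=B^\top X$. Under cross-entropy loss, $d^*(\mathcal{L})=d^*_{\rm CS}$.
   Context: $X\in\mathbb{R}^p$. A subspace $\mathcal{S}$ is a dimension-reduction subspace if $Y\perp\!\!\!\perp X\mid P_{\mathcal{S}}X$; the central subspace is their intersection, assumed itself to be one; $d^*_{\rm CS}$ is its dimension. Cross-entropy loss: $\ell(y,\hat y)=-e_y^\top\log\hat y=-\log\hat y_y$ for $\hat y$ in the probability simplex of $\mathbb{R}^M$. $R^*=B^\top X$ is zero-padded to $R\in\mathbb{R}^{d_{\max}}$; $\mathcal{G}$ = all measurable maps from $\mathbb{R}^{d_{\max}}$ to the simplex; $\mathcal{G}_d=\{g\in\mathcal{G}:g(r)=g(r')\text{ whenever } r_{[d]}=r'_{[d]}\}$; $\mathcal{L}_d=\min_{g\in\mathcal{G}_d}\mathbb{E}\,\ell(Y,g(R))$; $d^*(\mathcal{L})=\min\{0\le d\le d_{\max}:\mathcal{L}_d=\mathcal{L}_{d_{\max}}\}$. *)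

theory Defs
  imports "HOL-Probability.Probability"
begin

definition orth_proj :: "'a::euclidean_space set \<Rightarrow> 'a \<Rightarrow> 'a" where
  "orth_proj S x = (THE y. y \<in> S \<and> (\<forall>z\<in>S. orthogonal (x - y) z))"

definition cond_indep ::
  "'w measure \<Rightarrow> 'b measure \<Rightarrow> ('w \<Rightarrow> 'b) \<Rightarrow> 'c measure \<Rightarrow> ('w \<Rightarrow> 'c)
     \<Rightarrow> 'd measure \<Rightarrow> ('w \<Rightarrow> 'd) \<Rightarrow> bool" where
  "cond_indep M NY Y NX X NZ Z \<longleftrightarrow>
     (\<forall>A\<in>sets NY. \<forall>B\<in>sets NX.
        AE \<omega> in M.
          real_cond_exp M (vimage_algebra (space M) Z NZ)
              (indicator (Y -` A \<inter> X -` B \<inter> space M)) \<omega>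
        = real_cond_exp M (vimage_algebra (space M) Z NZ) (indicator (Y -` A \<inter> space M)) \<omega>
          * real_cond_exp M (vimage_algebra (space M) Z NZ) (indicator (X -` B \<inter> space M)) \<omega>)"

definition is_dr_subspace ::
  "'w measure \<Rightarrow> ('w \<Rightarrow> 'a::euclidean_space) \<Rightarrow> ('w \<Rightarrow> 'm) \<Rightarrow> 'a set \<Rightarrow> bool" where
  "is_dr_subspace M X Y S \<longleftrightarrow> subspace S \<and>
     cond_indep M (count_space UNIV) Y borel X borel (\<lambda>\<omega>. orth_proj S (X \<omega>))"

definition central_subspace ::
  "'w measure \<Rightarrow> ('w \<Rightarrow> 'a::euclidean_space) \<Rightarrow> ('w \<Rightarrow> 'm) \<Rightarrow> 'a set" where
  "central_subspace M X Y = \<Inter> {S. is_dr_subspace M X Y S}"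

(* probability simplex in R^M, classes indexed by the finite type 'm *)
definition prob_simplex :: "(real ^ 'm::finite) set" where
  "prob_simplex = {q. (\<forall>i. 0 \<le> q $ i) \<and> (\<Sum>i\<in>UNIV. q $ i) = 1}"

(* cross-entropy loss  -log yhat_y  (with -log 0 = +\<infinity>) *)
definition ce_loss :: "'m::finite \<Rightarrow> real ^ 'm \<Rightarrow> ennreal" where
  "ce_loss y yhat = (if 0 < yhat $ y then ennreal (- ln (yhat $ y)) else \<infinity>)"

(* R^{dmax}: functions on {..<dmax} (extensional) with the product Borel sigma-algebra *)
abbreviation Rspace :: "nat \<Rightarrow> (nat \<Rightarrow> real) measure" where
  "Rspace dmax \<equiv> PiM {..<dmax} (\<lambda>_. borel)"

definition Gall :: "nat \<Rightarrow> ((nat \<Rightarrow> real) \<Rightarrow> real ^ 'm::finite) set" where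
  "Gall dmax = {g. g \<in> Rspace dmax \<rightarrow>\<^sub>M borel \<and> (\<forall>r\<in>space (Rspace dmax). g r \<in> prob_simplex)}"

definition Gd :: "nat \<Rightarrow> nat \<Rightarrow> ((nat \<Rightarrow> real) \<Rightarrow> real ^ 'm::finite) set" where
  "Gd dmax d = {g \<in> Gall dmax. \<forall>r\<in>space (Rspace dmax). \<forall>r'\<in>space (Rspace dmax).
        (\<forall>i<d. r i = r' i) \<longrightarrow> g r = g r'}"

(* \<L>_d = min_{g \<in> \<G>_d} E l(Y, g(R))  (taken as an infimum; the loss is [0,\<infinity>]-valued) *)
definition Lrisk :: "'w measure \<Rightarrow> ('w \<Rightarrow> 'm::finite) \<Rightarrow> ('w \<Rightarrow> nat \<Rightarrow> real) \<Rightarrow> nat \<Rightarrow> nat \<Rightarrow> ennreal" where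
  "Lrisk M Y R dmax d = (INF g\<in>Gd dmax d. \<integral>\<^sup>+ \<omega>. ce_loss (Y \<omega>) (g (R \<omega>)) \<partial>M)"

definition d_star :: "'w measure \<Rightarrow> ('w \<Rightarrow> 'm::finite) \<Rightarrow> ('w \<Rightarrow> nat \<Rightarrow> real) \<Rightarrow> nat \<Rightarrow> nat" where
  "d_star M Y R dmax = (LEAST d. d \<le> dmax \<and> Lrisk M Y R dmax d = Lrisk M Y R dmax dmax)"

(* R = zero-padding of R^* = B^T X to length dmax; column i of B is b i *)
definition padded_R :: "('w \<Rightarrow> 'a::euclidean_space) \<Rightarrow> (nat \<Rightarrow> 'a) \<Rightarrow> nat \<Rightarrow> nat \<Rightarrow> 'w \<Rightarrow> nat \<Rightarrow> real" where
  "padded_R X b d dmax \<omega> = restrict (\<lambda>i. if i < d then b i \<bullet> X \<omega> else 0) {..<dmax}"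

end

theory Submission
  imports Defs
begin

(* Write S = span {b_i | i < d'} and C for the central subspace, d = dim C.  The optimal risk
   L_d' is at least the conditional entropy of Y given P_S X (Gibbs' inequality), while L_dmax
   is at most the conditional entropy of Y given P_C X, because the Bayes predictor (the vector
   of conditional class probabilities given P_C X) is a function of R.  Since R vanishes beyond
   coordinate d, L_d = L_dmax.  If L_d' = L_dmax held for some d' < d, then the entropy given
   the coarser P_S X would not exceed the entropy given P_C X; the equality case of Gibbs'
   inequality makes the two conditional class probabilities agree almost surely, so the
   conditional independence of Y and X given P_C X descends to P_S X.  Then S is a
   dimension-reduction subspace of dimension at most d' < dim C, contradicting the
   minimality of C. *)

section \<open>Cross-entropy on the probability simplex\<close>

lemma prob_simplex_nonneg: "q \<in> prob_simplex \<Longrightarrow> 0 \<le> q$y"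
  by (simp add: prob_simplex_def)

lemma prob_simplex_le_1:
  assumes "q \<in> prob_simplex" shows "q$y \<le> 1"
proof -
  have "q$y \<le> (\<Sum>i\<in>UNIV. q$i)"
    using assms by (intro member_le_sum) (auto simp: prob_simplex_def)
  then show ?thesis using assms by (simp add: prob_simplex_def)
qed

lemma closed_prob_simplex: "closed (prob_simplex :: (real^'m::finite) set)"
proof -
  have "prob_simplex = {x::real^'m. \<forall>i. 0 \<le> x$i} \<inter> {x. (\<Sum>i\<in>UNIV. x$i) = 1}"
    unfolding prob_simplex_def by auto
  moreover have "closed {x::real^'m. (\<Sum>i\<in>UNIV. x$i) = 1}"
    by (intro closed_Collect_eq continuous_intros)
  ultimately show ?thesis using closed_Int[OF closed_positive_orthant] by metis
qed

lemma uniform_in_prob_simplex: "(\<chi> y::'m::finite. 1 / real CARD('m)) \<in> prob_simplex"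
  unfolding prob_simplex_def by simp

lemma mult_ln_div_ge_diff:
  fixes p q :: real
  assumes "0 < p" "0 < q"
  shows "p - q \<le> p * ln (p / q)"
    and "p * ln (p / q) = p - q \<Longrightarrow> p = q"
proof -
  have ln_pq: "p * ln (p / q) = - p * ln (q / p)"
    using assms by (simp add: ln_div algebra_simps)
  have lin: "p * (q / p - 1) = q - p" using assms by (simp add: field_simps)
  have "p * ln (q / p) \<le> p * (q / p - 1)"
    using assms by (intro mult_left_mono ln_le_minus_one) auto
  then show "p - q \<le> p * ln (p / q)" using ln_pq lin by linarith
  assume "p * ln (p / q) = p - q"
  then have "p * ln (q / p) = p * (q / p - 1)" using ln_pq lin by linarith
  then have "ln (q / p) = q / p - 1" using assms by simp
  then have "q / p = 1" using assms by (intro ln_eq_minus_one) auto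
  then show "p = q" using assms by simp
qed

lemma gibbs_inequality:
  fixes p q :: "real^'m::finite"
  assumes p: "p \<in> prob_simplex" and q: "q \<in> prob_simplex"
    and supp: "\<And>y. 0 < p$y \<Longrightarrow> 0 < q$y"
  defines "P \<equiv> {y. 0 < p$y}"
  shows "(\<Sum>y\<in>P. p$y * - ln (p$y)) \<le> (\<Sum>y\<in>P. p$y * - ln (q$y))"
    and "(\<Sum>y\<in>P. p$y * - ln (q$y)) \<le> (\<Sum>y\<in>P. p$y * - ln (p$y)) \<Longrightarrow> p = q"
proof -
  define D where "D y = p$y * ln (p$y / q$y) - (p$y - q$y)" for y
  have D_nonneg: "0 \<le> D y" if "y \<in> P" for y
    using mult_ln_div_ge_diff(1)[of "p$y" "q$y"] that supp by (simp add: D_def P_def)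
  have summand: "p$y * - ln (q$y) - p$y * - ln (p$y) = D y + (p$y - q$y)" if "y \<in> P" for y
  proof -
    have "0 < p$y" "0 < q$y" using that supp by (auto simp: P_def)
    then show ?thesis by (simp add: D_def ln_div algebra_simps)
  qed
  have p_off: "p$y = 0" if "y \<notin> P" for y
    using that prob_simplex_nonneg[OF p, of y] by (simp add: P_def)
  have "(\<Sum>y\<in>P. p$y) = (\<Sum>y\<in>UNIV. p$y)"
    using p_off by (intro sum.mono_neutral_left) auto
  then have sum_p: "(\<Sum>y\<in>P. p$y) = 1" using p by (simp add: prob_simplex_def)
  have split_q: "(\<Sum>y\<in>P. q$y) + (\<Sum>y\<in>-P. q$y) = 1"
    using q sum.union_disjoint[of P "-P" "\<lambda>y. q$y"] by (simp add: prob_simplex_def union_commute)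
  have q_off_nonneg: "0 \<le> (\<Sum>y\<in>-P. q$y)"
    using prob_simplex_nonneg[OF q] by (simp add: sum_nonneg)
  have "(\<Sum>y\<in>P. p$y * - ln (q$y)) - (\<Sum>y\<in>P. p$y * - ln (p$y))
      = (\<Sum>y\<in>P. D y + (p$y - q$y))"
    using summand by (simp only: sum_subtractf[symmetric] cong: sum.cong)
  also have "\<dots> = (\<Sum>y\<in>P. D y) + (\<Sum>y\<in>-P. q$y)"
    using sum_p split_q by (simp add: sum.distrib sum_subtractf)
  finally have gap: "(\<Sum>y\<in>P. p$y * - ln (q$y)) - (\<Sum>y\<in>P. p$y * - ln (p$y))
      = (\<Sum>y\<in>P. D y) + (\<Sum>y\<in>-P. q$y)" .
  have "0 \<le> (\<Sum>y\<in>P. D y)" using D_nonneg by (simp add: sum_nonneg)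
  then show "(\<Sum>y\<in>P. p$y * - ln (p$y)) \<le> (\<Sum>y\<in>P. p$y * - ln (q$y))"
    using gap q_off_nonneg by linarith
  assume "(\<Sum>y\<in>P. p$y * - ln (q$y)) \<le> (\<Sum>y\<in>P. p$y * - ln (p$y))"
  then have "(\<Sum>y\<in>P. D y) = 0" "(\<Sum>y\<in>-P. q$y) = 0"
    using gap q_off_nonneg \<open>0 \<le> (\<Sum>y\<in>P. D y)\<close> by linarith+
  then have D0: "\<forall>y\<in>P. D y = 0" and q_off: "\<forall>y\<in>-P. q$y = 0"
    using D_nonneg prob_simplex_nonneg[OF q] by (simp_all add: sum_nonneg_eq_0_iff)
  have "p$y = q$y" for y
  proof (cases "y \<in> P")
    case True
    then have "0 < p$y" "0 < q$y" using supp by (auto simp: P_def)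
    moreover have "p$y * ln (p$y / q$y) = p$y - q$y" using D0 True by (simp add: D_def)
    ultimately show ?thesis by (rule mult_ln_div_ge_diff(2))
  next
    case False
    then show ?thesis using p_off q_off by simp
  qed
  then show "p = q" by (simp add: vec_eq_iff)
qed

definition cross_entropy :: "real^'m::finite \<Rightarrow> real^'m \<Rightarrow> ennreal" where
  "cross_entropy p q = (\<Sum>y\<in>UNIV. ennreal (p$y) * ce_loss y q)"

lemma cross_entropy_eq_sum:
  fixes p q :: "real^'m::finite"
  assumes p: "p \<in> prob_simplex" and q: "q \<in> prob_simplex"
    and supp: "\<And>y. 0 < p$y \<Longrightarrow> 0 < q$y"
  shows "cross_entropy p q = ennreal (\<Sum>y\<in>{y. 0 < p$y}. p$y * - ln (q$y))"
proof -
  have "ennreal (p$y) * ce_loss y q = ennreal (if 0 < p$y then p$y * - ln (q$y) else 0)" for y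
  proof (cases "0 < p$y")
    case True
    then have "0 < q$y" "q$y \<le> 1" using supp prob_simplex_le_1[OF q] by auto
    then show ?thesis using True ennreal_mult[of "p$y" "- ln (q$y)"] by (simp add: ce_loss_def)
  next
    case False
    then show ?thesis using prob_simplex_nonneg[OF p, of y] by simp
  qed
  moreover have "0 \<le> (if 0 < p$y then p$y * - ln (q$y) else 0)" for y
    using supp prob_simplex_le_1[OF q, of y] by (simp add: mult_nonneg_nonpos)
  ultimately show ?thesis
    unfolding cross_entropy_def by (simp add: sum_ennreal sum.If_cases)
qed

lemma cross_entropy_eq_top:
  assumes "0 < p$y" "\<not> 0 < q$y"
  shows "cross_entropy p q = \<infinity>"
proof -
  have "ennreal (p$y) * ce_loss y q \<le> cross_entropy p q"
    unfolding cross_entropy_def by (intro member_le_sum) auto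
  then show ?thesis using assms by (simp add: ce_loss_def ennreal_mult_top top_unique)
qed

lemma entropy_le_cross_entropy:
  assumes p: "p \<in> prob_simplex" and q: "q \<in> prob_simplex"
  shows "cross_entropy p p \<le> cross_entropy p q"
proof (cases "\<forall>y. 0 < p$y \<longrightarrow> 0 < q$y")
  case True
  then show ?thesis
    using gibbs_inequality(1)[OF p q] by (simp add: cross_entropy_eq_sum p q ennreal_leI)
qed (auto simp: cross_entropy_eq_top)

lemma cross_entropy_le_entropy_imp_eq:
  assumes p: "p \<in> prob_simplex" and q: "q \<in> prob_simplex"
    and le: "cross_entropy p q \<le> cross_entropy p p"
  shows "p = q"
proof -
  have Hp: "cross_entropy p p = ennreal (\<Sum>y\<in>{y. 0 < p$y}. p$y * - ln (p$y))"
    by (simp add: cross_entropy_eq_sum p)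
  have supp: "0 < q$y" if "0 < p$y" for y
  proof (rule ccontr)
    assume "\<not> 0 < q$y"
    then have "cross_entropy p q = \<infinity>" by (rule cross_entropy_eq_top[OF that])
    then show False using le Hp by (simp add: top_unique)
  qed
  have "0 \<le> (\<Sum>y\<in>{y. 0 < p$y}. p$y * - ln (p$y))"
    using prob_simplex_le_1[OF p] by (intro sum_nonneg) (simp add: mult_nonneg_nonpos)
  then show "p = q"
    using le gibbs_inequality(2)[OF p q supp] by (simp add: Hp cross_entropy_eq_sum p q supp)
qed

lemma entropy_le_card:
  fixes p :: "real^'m::finite"
  assumes p: "p \<in> prob_simplex"
  shows "cross_entropy p p \<le> of_nat CARD('m)"
proof -
  have "p$y * - ln (p$y) \<le> 1" if "0 < p$y" for y :: 'm
  proof -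
    have "- ln (p$y) = ln (1 / p$y)" using that by (simp add: ln_div)
    also have "\<dots> \<le> 1 / p$y" using that ln_le_minus_one[of "1 / p$y"] by simp
    finally show ?thesis using that by (simp add: field_simps)
  qed
  then have "(\<Sum>y\<in>{y. 0 < p$y}. p$y * - ln (p$y)) \<le> real (card {y::'m. 0 < p$y})"
    using sum_mono[of "{y. 0 < p$y}" "\<lambda>y. p$y * - ln (p$y)" "\<lambda>_. 1"] by simp
  also have "\<dots> \<le> real CARD('m)" by (simp add: card_mono)
  finally show ?thesis
    by (simp add: cross_entropy_eq_sum p ennreal_of_nat_eq_real_of_nat ennreal_leI)
qed

section \<open>Orthogonal projections\<close>

lemma orth_proj_eqI:
  fixes S :: "'a::euclidean_space set"
  assumes S: "subspace S" and y: "y \<in> S" "\<And>z. z \<in> S \<Longrightarrow> orthogonal (x - y) z"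
  shows "orth_proj S x = y"
  unfolding orth_proj_def
proof (rule the_equality)
  fix y' assume y': "y' \<in> S \<and> (\<forall>z\<in>S. orthogonal (x - y') z)"
  have "y - y' \<in> S" using S y y' by (simp add: subspace_diff)
  then have "orthogonal (x - y') (y - y')" "orthogonal (x - y) (y - y')" using y y' by auto
  then have "(y - y') \<bullet> (y - y') = 0"
    unfolding orthogonal_def by (simp add: algebra_simps)
  then show "y' = y" by simp
qed (use y in auto)

lemma orth_proj:
  fixes S :: "'a::euclidean_space set"
  assumes S: "subspace S"
  shows "orth_proj S x \<in> S" and "z \<in> S \<Longrightarrow> orthogonal (x - orth_proj S x) z"
proof -
  obtain y w where "y \<in> span S" "\<And>z. z \<in> span S \<Longrightarrow> orthogonal w z" "x = y + w"
    using orthogonal_subspace_decomp_exists[of S x] by metis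
  moreover have "span S = S" using S by (rule span_eq_iff[THEN iffD2])
  ultimately have "y \<in> S" "\<And>z. z \<in> S \<Longrightarrow> orthogonal (x - y) z" by auto
  then show "orth_proj S x \<in> S" "z \<in> S \<Longrightarrow> orthogonal (x - orth_proj S x) z"
    using orth_proj_eqI[OF S] by auto
qed

lemma inner_orth_proj:
  fixes S :: "'a::euclidean_space set"
  assumes "subspace S" "z \<in> S"
  shows "z \<bullet> orth_proj S x = z \<bullet> x"
  using orth_proj(2)[OF assms]
  by (simp add: orthogonal_def inner_diff_left inner_diff_right inner_commute)

lemma orth_proj_orth_proj:
  fixes S T :: "'a::euclidean_space set"
  assumes S: "subspace S" and T: "subspace T" and "S \<subseteq> T"
  shows "orth_proj S (orth_proj T x) = orth_proj S x"
proof (rule orth_proj_eqI[OF S orth_proj(1)[OF S]])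
  fix z assume "z \<in> S"
  then have "orthogonal (x - orth_proj S x) z" "orthogonal (x - orth_proj T x) z"
    using orth_proj(2)[OF S] orth_proj(2)[OF T] assms(3) by auto
  then show "orthogonal (orth_proj T x - orth_proj S x) z"
    by (simp add: orthogonal_def inner_diff_left)
qed

lemma orth_proj_eq_onb_sum:
  fixes S :: "'a::euclidean_space set"
  assumes S: "subspace S" and B: "B \<subseteq> S" "pairwise orthogonal B" "\<And>e. e \<in> B \<Longrightarrow> norm e = 1"
    "span B = S"
  shows "orth_proj S x = (\<Sum>e\<in>B. (e \<bullet> x) *\<^sub>R e)"
proof -
  have "\<forall>e\<in>B. e \<bullet> e = 1" using B(3) by (simp add: norm_eq_1)
  then have "(\<Sum>e\<in>B. (e \<bullet> x / (e \<bullet> e)) *\<^sub>R e) = (\<Sum>e\<in>B. (e \<bullet> x) *\<^sub>R e)" by simp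
  moreover have "orthogonal (x - (\<Sum>e\<in>B. (e \<bullet> x / (e \<bullet> e)) *\<^sub>R e)) z" if "z \<in> S" for z
    using that B by (simp add: Gram_Schmidt_step orthogonal_commute)
  moreover have "(\<Sum>e\<in>B. (e \<bullet> x) *\<^sub>R e) \<in> S"
    using B S by (intro subspace_sum subspace_scale) auto
  ultimately show ?thesis by (intro orth_proj_eqI[OF S]) auto
qed

lemma borel_measurable_orth_proj:
  fixes S :: "'a::euclidean_space set"
  assumes "subspace S"
  shows "orth_proj S \<in> borel_measurable borel"
proof -
  obtain B where "B \<subseteq> S" "pairwise orthogonal B" "\<And>e. e \<in> B \<Longrightarrow> norm e = 1" "span B = S"
    using orthonormal_basis_subspace[OF assms] by metis
  then have "orth_proj S = (\<lambda>x. \<Sum>e\<in>B. (e \<bullet> x) *\<^sub>R e)"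
    using orth_proj_eq_onb_sum[OF assms] by auto
  then show ?thesis by simp
qed

lemma orth_proj_factor_inner:
  fixes b :: "nat \<Rightarrow> 'a::euclidean_space"
  assumes span: "span (b ` {..<d}) = C" and inj: "inj_on b {..<d}" and "d \<le> n"
  obtains L where "L \<in> borel_measurable (Rspace n)"
    "\<And>x r. (\<forall>i<d. r i = b i \<bullet> x) \<Longrightarrow> L r = orth_proj C x"
proof -
  have C: "subspace C" using span by (metis subspace_span)
  obtain B where B: "B \<subseteq> C" "pairwise orthogonal B" "\<And>e. e \<in> B \<Longrightarrow> norm e = 1" "span B = C"
    using orthonormal_basis_subspace[OF C] by metis
  have "\<exists>u. e = (\<Sum>v\<in>b ` {..<d}. u v *\<^sub>R v)" if "e \<in> B" for e
    using that B(1) span span_finite[of "b ` {..<d}"] by auto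
  then obtain u where u: "\<And>e. e \<in> B \<Longrightarrow> e = (\<Sum>v\<in>b ` {..<d}. u e v *\<^sub>R v)"
    by metis
  define L where "L r = (\<Sum>e\<in>B. (\<Sum>i<d. u e (b i) * r i) *\<^sub>R e)" for r :: "nat \<Rightarrow> real"
  have "(\<lambda>r. r i) \<in> borel_measurable (Rspace n)" if "i < d" for i
    using that \<open>d \<le> n\<close> by (intro measurable_component_singleton) auto
  then have "L \<in> borel_measurable (Rspace n)"
    unfolding L_def by (intro borel_measurable_sum borel_measurable_scaleR borel_measurable_const
        borel_measurable_times) auto
  moreover have "L r = orth_proj C x" if r: "\<forall>i<d. r i = b i \<bullet> x" for x r
  proof -
    have "e \<bullet> x = (\<Sum>i<d. u e (b i) * r i)" if e: "e \<in> B" for e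
    proof -
      have "e \<bullet> x = (\<Sum>v\<in>b ` {..<d}. u e v * (v \<bullet> x))"
        by (subst u[OF e]) (simp add: inner_sum_left)
      also have "\<dots> = (\<Sum>i<d. u e (b i) * r i)"
        using r by (simp add: sum.reindex[OF inj])
      finally show ?thesis .
    qed
    then show ?thesis unfolding L_def using orth_proj_eq_onb_sum[OF C B] by simp
  qed
  ultimately show ?thesis using that by blast
qed

section \<open>Conditional class probabilities\<close>

lemma measurable_vec_nth [measurable]:
  fixes f :: "'w \<Rightarrow> real^'n"
  assumes "f \<in> borel_measurable M"
  shows "(\<lambda>x. f x $ i) \<in> borel_measurable M"
  using borel_measurable_continuous_on[OF continuous_on_component[OF continuous_on_id] assms] by simp

lemma measurable_vec_lambda [measurable]:
  fixes f :: "'n::finite \<Rightarrow> 'w \<Rightarrow> real"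
  assumes "\<And>i. f i \<in> borel_measurable M"
  shows "(\<lambda>x. \<chi> i. f i x) \<in> borel_measurable M"
proof (subst borel_measurable_euclidean_space, intro ballI)
  fix j :: "real^'n" assume "j \<in> Basis"
  then obtain k where k: "j = axis k 1" by (auto simp: Basis_vec_def)
  have "(\<lambda>x. (\<chi> i. f i x) \<bullet> j) = f k" by (auto simp: k inner_axis)
  then show "(\<lambda>x. (\<chi> i. f i x) \<bullet> j) \<in> borel_measurable M" using assms by simp
qed

lemma measurable_ce_loss [measurable]:
  assumes [measurable]: "f \<in> borel_measurable M"
  shows "(\<lambda>x. ce_loss y (f x)) \<in> borel_measurable M"
  unfolding ce_loss_def by measurable

lemma measurable_cross_entropy [measurable]:
  fixes f g :: "'w \<Rightarrow> real^'m::finite"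
  assumes [measurable]: "f \<in> borel_measurable M" "g \<in> borel_measurable M"
  shows "(\<lambda>x. cross_entropy (f x) (g x)) \<in> borel_measurable M"
  unfolding cross_entropy_def by measurable

lemma subalgebra_vimage_algebra:
  assumes "T \<in> M \<rightarrow>\<^sub>M N"
  shows "subalgebra M (vimage_algebra (space M) T N)"
  using sets_image_in_sets[OF refl assms] unfolding subalgebra_def by simp

lemma (in prob_space) sigma_finite_subalgebra_of_subalgebra:
  assumes "subalgebra M H"
  shows "sigma_finite_subalgebra M H"
proof -
  have "finite_measure_subalgebra M H" by unfold_locales (rule assms)
  then show ?thesis by (rule finite_measure_subalgebra_is_sigma_finite)
qed

lemma (in sigma_finite_subalgebra) nn_cond_exp_sum_finite:
  assumes "finite I" "\<And>i. i \<in> I \<Longrightarrow> f i \<in> borel_measurable M"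
  shows "AE x in M. nn_cond_exp M F (\<lambda>x. \<Sum>i\<in>I. f i x) x = (\<Sum>i\<in>I. nn_cond_exp M F (f i) x)"
  using assms
proof (induction I rule: finite_induct)
  case empty
  have "AE x in M. 0 = nn_cond_exp M F (\<lambda>x. 0) x"
    by (rule nn_cond_exp_F_meas) simp
  then show ?case by auto
next
  case (insert i I)
  have "AE x in M. nn_cond_exp M F (f i) x + nn_cond_exp M F (\<lambda>x. \<Sum>j\<in>I. f j x) x
      = nn_cond_exp M F (\<lambda>x. f i x + (\<Sum>j\<in>I. f j x)) x"
    using insert.prems by (intro nn_cond_exp_sum) auto
  with insert show ?case by auto
qed

lemma doob_dynkin_ennreal:
  fixes f :: "'w \<Rightarrow> ennreal"
  assumes f: "f \<in> borel_measurable (vimage_algebra \<Omega> T N)" and T: "T \<in> \<Omega> \<rightarrow> space N"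
  obtains \<phi> where "\<phi> \<in> borel_measurable N" "\<And>\<omega>. \<omega> \<in> \<Omega> \<Longrightarrow> f \<omega> = \<phi> (T \<omega>)"
proof -
  obtain u where u: "\<And>i. simple_function (vimage_algebra \<Omega> T N) (u i)" "incseq u"
    "\<And>i x. u i x < top" "\<And>x. (SUP i. u i x) = f x"
    using borel_measurable_implies_simple_function_sequence'[OF f] by blast
  have fin: "finite (u i ` \<Omega>)" for i
    using simple_functionD(1)[OF u(1)[of i]] by simp
  have "\<exists>A. A \<in> sets N \<and> u i -` {v} \<inter> \<Omega> = T -` A \<inter> \<Omega>" for i v
  proof -
    have "u i -` {v} \<inter> \<Omega> \<in> sets (vimage_algebra \<Omega> T N)"
      using simple_functionD(2)[OF u(1)[of i]] by simp
    then show ?thesis unfolding sets_vimage_algebra2[OF T] by auto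
  qed
  then obtain A where A: "\<And>i v. A i v \<in> sets N" "\<And>i v. u i -` {v} \<inter> \<Omega> = T -` (A i v) \<inter> \<Omega>"
    by metis
  define \<psi> where "\<psi> i x = (\<Sum>v\<in>u i ` \<Omega>. v * indicator (A i v) x)" for i x
  define \<phi> where "\<phi> x = (SUP i. \<psi> i x)" for x
  have "\<phi> \<in> borel_measurable N"
    unfolding \<phi>_def \<psi>_def using A(1) by measurable
  moreover have "f \<omega> = \<phi> (T \<omega>)" if \<omega>: "\<omega> \<in> \<Omega>" for \<omega>
  proof -
    have "\<psi> i (T \<omega>) = u i \<omega>" for i
    proof -
      have "indicator (A i v) (T \<omega>) = (if u i \<omega> = v then 1 else (0::ennreal))" for v
        using A(2)[of i v] \<omega> by (auto simp: indicator_def)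
      then have "\<psi> i (T \<omega>) = (\<Sum>v\<in>u i ` \<Omega>. if u i \<omega> = v then v else 0)"
        unfolding \<psi>_def by (intro sum.cong) auto
      also have "\<dots> = u i \<omega>" using fin[of i] \<omega> by (simp add: sum.delta)
      finally show ?thesis .
    qed
    then show ?thesis unfolding \<phi>_def using u(4) by simp
  qed
  ultimately show ?thesis using that by blast
qed

text \<open>A version of \<open>(P(Y = y | H))\<^sub>y\<close>; it lies in the simplex only almost surely.\<close>

definition cond_class_prob :: "'w measure \<Rightarrow> 'w measure \<Rightarrow> ('w \<Rightarrow> 'm::finite) \<Rightarrow> 'w \<Rightarrow> real^'m" where
  "cond_class_prob M H Y \<omega> = (\<chi> y. enn2real (nn_cond_exp M H (indicator (Y -` {y} \<inter> space M)) \<omega>))"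

lemma borel_measurable_cond_class_prob [measurable]: "cond_class_prob M H Y \<in> borel_measurable H"
  unfolding cond_class_prob_def by (intro measurable_vec_lambda borel_measurable_enn2real borel_measurable_nn_cond_exp)

lemma cond_class_prob_vimage_factor:
  fixes Y :: "'w \<Rightarrow> 'm::finite"
  assumes T: "T \<in> space M \<rightarrow> space N"
  obtains \<phi> where "\<phi> \<in> borel_measurable N"
    "\<And>\<omega>. \<omega> \<in> space M \<Longrightarrow> cond_class_prob M (vimage_algebra (space M) T N) Y \<omega> = \<phi> (T \<omega>)"
proof -
  let ?I = "\<lambda>y. indicator (Y -` {y} \<inter> space M) :: 'w \<Rightarrow> ennreal"
  have "\<exists>\<psi>. \<psi> \<in> borel_measurable N \<and>
      (\<forall>\<omega>\<in>space M. nn_cond_exp M (vimage_algebra (space M) T N) (?I y) \<omega> = \<psi> (T \<omega>))" for y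
  proof -
    obtain \<psi> where "\<psi> \<in> borel_measurable N"
      "\<And>\<omega>. \<omega> \<in> space M \<Longrightarrow> nn_cond_exp M (vimage_algebra (space M) T N) (?I y) \<omega> = \<psi> (T \<omega>)"
      by (rule doob_dynkin_ennreal[OF borel_measurable_nn_cond_exp T]) auto
    then show ?thesis by blast
  qed
  then obtain \<psi> where \<psi>_meas: "\<And>y. \<psi> y \<in> borel_measurable N"
    and \<psi>_eq: "\<And>y \<omega>. \<omega> \<in> space M \<Longrightarrow> nn_cond_exp M (vimage_algebra (space M) T N) (?I y) \<omega> = \<psi> y (T \<omega>)"
    by metis
  show ?thesis
  proof
    show "(\<lambda>x. \<chi> y. enn2real (\<psi> y x)) \<in> borel_measurable N"
      by (intro measurable_vec_lambda borel_measurable_enn2real \<psi>_meas)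
    show "cond_class_prob M (vimage_algebra (space M) T N) Y \<omega> = (\<chi> y. enn2real (\<psi> y (T \<omega>)))"
      if "\<omega> \<in> space M" for \<omega>
      using \<psi>_eq[OF that] by (simp add: cond_class_prob_def)
  qed
qed

context
  fixes M H :: "'w measure" and Y :: "'w \<Rightarrow> 'm::finite"
  assumes P: "prob_space M" and Y: "Y \<in> M \<rightarrow>\<^sub>M count_space UNIV" and sub: "subalgebra M H"
begin

interpretation prob_space M by (rule P)
interpretation sigma_finite_subalgebra M H
  by (rule sigma_finite_subalgebra_of_subalgebra[OF sub])

lemma measurable_indicator_vimage [measurable]: "indicator (Y -` A \<inter> space M) \<in> borel_measurable M"
proof -
  have "Y -` A \<inter> space M \<in> sets M" using Y by (rule measurable_sets) simp
  then show ?thesis by simp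
qed

lemma cond_class_prob_AE:
  "AE \<omega> in M. (\<forall>y. nn_cond_exp M H (indicator (Y -` {y} \<inter> space M)) \<omega> = ennreal (cond_class_prob M H Y \<omega> $ y))
      \<and> cond_class_prob M H Y \<omega> \<in> prob_simplex"
proof -
  let ?p = "\<lambda>y. nn_cond_exp M H (indicator (Y -` {y} \<inter> space M))"
  have sum_indicator: "(\<Sum>y\<in>UNIV. indicator (Y -` {y} \<inter> space M) x) = (1::ennreal)"
    if "x \<in> space M" for x
    using that by (simp add: indicator_def)
  have "AE x in M. nn_cond_exp M H (\<lambda>x. \<Sum>y\<in>UNIV. indicator (Y -` {y} \<inter> space M) x) x
      = nn_cond_exp M H (\<lambda>x. 1) x"
    by (rule nn_cond_exp_cong) (auto simp: sum_indicator)
  moreover have "AE x in M. nn_cond_exp M H (\<lambda>x. \<Sum>y\<in>UNIV. indicator (Y -` {y} \<inter> space M) x) x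
      = (\<Sum>y\<in>UNIV. ?p y x)"
    by (rule nn_cond_exp_sum_finite) auto
  moreover have "AE x in M. 1 = nn_cond_exp M H (\<lambda>x. 1) x"
    by (rule nn_cond_exp_F_meas) simp
  ultimately have "AE x in M. (\<Sum>y\<in>UNIV. ?p y x) = 1" by auto
  then show ?thesis
  proof (rule eventually_mono)
    fix x assume sum1: "(\<Sum>y\<in>UNIV. ?p y x) = 1"
    have le1: "?p y x \<le> 1" for y
      using sum1 member_le_sum[of y UNIV "\<lambda>y. ?p y x"] by simp
    have fin: "?p y x < \<infinity>" for y
      using le_less_trans[OF le1[of y]] by simp
    then have "?p y x = ennreal (cond_class_prob M H Y x $ y)" for y
      unfolding cond_class_prob_def by (simp add: ennreal_enn2real_if less_top)
    moreover have "(\<Sum>y\<in>UNIV. cond_class_prob M H Y x $ y) = enn2real (\<Sum>y\<in>UNIV. ?p y x)"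
      using fin by (simp add: enn2real_sum cond_class_prob_def)
    ultimately show "(\<forall>y. ?p y x = ennreal (cond_class_prob M H Y x $ y)) \<and> cond_class_prob M H Y x \<in> prob_simplex"
      using sum1 unfolding prob_simplex_def by (simp add: cond_class_prob_def)
  qed
qed

lemma nn_integral_ce_loss_eq_cross_entropy:
  fixes q :: "'w \<Rightarrow> real^'m"
  assumes q: "q \<in> borel_measurable H"
  shows "(\<integral>\<^sup>+ \<omega>. ce_loss (Y \<omega>) (q \<omega>) \<partial>M) = (\<integral>\<^sup>+ \<omega>. cross_entropy (cond_class_prob M H Y \<omega>) (q \<omega>) \<partial>M)"
proof -
  let ?I = "\<lambda>y. indicator (Y -` {y} \<inter> space M) :: 'w \<Rightarrow> ennreal"
  have [measurable]: "q \<in> borel_measurable M" "cond_class_prob M H Y \<in> borel_measurable M"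
    using measurable_from_subalg[OF sub q] measurable_from_subalg[OF sub borel_measurable_cond_class_prob]
    by auto
  have loss_H [measurable]: "(\<lambda>\<omega>. ce_loss y (q \<omega>)) \<in> borel_measurable H" for y
    using q by measurable
  have "(\<integral>\<^sup>+ \<omega>. ce_loss (Y \<omega>) (q \<omega>) \<partial>M) = (\<integral>\<^sup>+ \<omega>. (\<Sum>y\<in>UNIV. ce_loss y (q \<omega>) * ?I y \<omega>) \<partial>M)"
  proof (rule nn_integral_cong)
    fix \<omega> assume "\<omega> \<in> space M"
    then have "(\<Sum>y\<in>UNIV. ce_loss y (q \<omega>) * ?I y \<omega>) = (\<Sum>y\<in>UNIV. if y = Y \<omega> then ce_loss y (q \<omega>) else 0)"
      by (intro sum.cong) (auto simp: indicator_def)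
    then show "ce_loss (Y \<omega>) (q \<omega>) = (\<Sum>y\<in>UNIV. ce_loss y (q \<omega>) * ?I y \<omega>)" by simp
  qed
  also have "\<dots> = (\<Sum>y\<in>UNIV. \<integral>\<^sup>+ \<omega>. ce_loss y (q \<omega>) * ?I y \<omega> \<partial>M)"
    by (rule nn_integral_sum) measurable
  also have "\<dots> = (\<Sum>y\<in>UNIV. \<integral>\<^sup>+ \<omega>. ce_loss y (q \<omega>) * nn_cond_exp M H (?I y) \<omega> \<partial>M)"
    by (intro sum.cong refl nn_cond_exp_intg[symmetric] loss_H measurable_indicator_vimage)
  also have "\<dots> = (\<Sum>y\<in>UNIV. \<integral>\<^sup>+ \<omega>. ennreal (cond_class_prob M H Y \<omega> $ y) * ce_loss y (q \<omega>) \<partial>M)"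
    by (intro sum.cong refl nn_integral_cong_AE) (use cond_class_prob_AE in \<open>auto simp: mult.commute\<close>)
  also have "\<dots> = (\<integral>\<^sup>+ \<omega>. cross_entropy (cond_class_prob M H Y \<omega>) (q \<omega>) \<partial>M)"
    unfolding cross_entropy_def by (rule nn_integral_sum[symmetric]) measurable
  finally show ?thesis .
qed

lemma real_cond_exp_indicator_vimage:
  "AE \<omega> in M. real_cond_exp M H (indicator (Y -` A \<inter> space M)) \<omega> = (\<Sum>y\<in>A. cond_class_prob M H Y \<omega> $ y)"
proof -
  let ?I = "\<lambda>y. indicator (Y -` {y} \<inter> space M) :: 'w \<Rightarrow> ennreal"
  have "ennreal (indicator (Y -` A \<inter> space M) x) = (\<Sum>y\<in>A. ?I y x)" if "x \<in> space M" for x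
  proof -
    have "(\<Sum>y\<in>A. ?I y x) = (\<Sum>y\<in>A. if Y x = y then 1 else 0)"
      using that by (intro sum.cong) (auto simp: indicator_def)
    then show ?thesis using that by (simp add: sum.delta indicator_def)
  qed
  then have "AE x in M. nn_cond_exp M H (\<lambda>x. ennreal (indicator (Y -` A \<inter> space M) x)) x
      = nn_cond_exp M H (\<lambda>x. \<Sum>y\<in>A. ?I y x) x"
    by (intro nn_cond_exp_cong AE_I2) (auto simp flip: ennreal_indicator)
  moreover have "AE x in M. nn_cond_exp M H (\<lambda>x. \<Sum>y\<in>A. ?I y x) x = (\<Sum>y\<in>A. nn_cond_exp M H (?I y) x)"
    by (rule nn_cond_exp_sum_finite) auto
  moreover have "AE x in M. 0 = nn_cond_exp M H (\<lambda>x. 0) x"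
    by (rule nn_cond_exp_F_meas) simp
  ultimately show ?thesis
    using cond_class_prob_AE
  proof eventually_elim
    case (elim x)
    have "real_cond_exp M H (indicator (Y -` A \<inter> space M)) x
        = enn2real (\<Sum>y\<in>A. ennreal (cond_class_prob M H Y x $ y))"
      unfolding real_cond_exp_def using elim by (simp add: ennreal_neg)
    also have "\<dots> = (\<Sum>y\<in>A. cond_class_prob M H Y x $ y)"
      using elim(4) by (simp add: prob_simplex_def sum_nonneg)
    finally show ?case .
  qed
qed

end

text \<open>If the conditional class probabilities given \<open>F\<close> and given the coarser \<open>G\<close> agree, then
  \<open>E[a|F] = E[a|G]\<close> for \<open>a = 1\<^sub>A(Y)\<close>, and the tower property gives
  \<open>E[a c|G] = E[E[a c|F]|G] = E[a|G] E[E[c|F]|G] = E[a|G] E[c|G]\<close>.\<close>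

lemma cond_indep_coarsen:
  fixes M :: "'w measure" and Y :: "'w \<Rightarrow> 'm::finite" and X :: "'w \<Rightarrow> 'x"
    and Z :: "'w \<Rightarrow> 'z" and Z' :: "'w \<Rightarrow> 'z'" and NZ :: "'z measure" and NZ' :: "'z' measure"
  defines "F \<equiv> vimage_algebra (space M) Z NZ" and "G \<equiv> vimage_algebra (space M) Z' NZ'"
  assumes P: "prob_space M" and Y: "Y \<in> M \<rightarrow>\<^sub>M count_space UNIV" and X: "X \<in> M \<rightarrow>\<^sub>M NX"
    and sub_F: "subalgebra M F" and sub_G: "subalgebra M G" and sub_GF: "subalgebra F G"
    and eq: "AE \<omega> in M. cond_class_prob M F Y \<omega> = cond_class_prob M G Y \<omega>"
    and ci: "cond_indep M (count_space UNIV) Y NX X NZ Z"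
  shows "cond_indep M (count_space UNIV) Y NX X NZ' Z'"
  unfolding cond_indep_def
proof (intro ballI)
  interpret prob_space M by (rule P)
  interpret F: sigma_finite_subalgebra M F by (rule sigma_finite_subalgebra_of_subalgebra[OF sub_F])
  interpret G: sigma_finite_subalgebra M G by (rule sigma_finite_subalgebra_of_subalgebra[OF sub_G])
  fix A :: "'m set" and B assume A: "A \<in> sets (count_space UNIV)" and B: "B \<in> sets NX"
  define a where "a = (indicator (Y -` A \<inter> space M) :: 'w \<Rightarrow> real)"
  define c where "c = (indicator (X -` B \<inter> space M) :: 'w \<Rightarrow> real)"
  define ac where "ac = (indicator (Y -` A \<inter> X -` B \<inter> space M) :: 'w \<Rightarrow> real)"
  have YA: "Y -` A \<inter> space M \<in> sets M" using measurable_sets[OF Y] by simp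
  have XB: "X -` B \<inter> space M \<in> sets M" using measurable_sets[OF X B] .
  have "Y -` A \<inter> X -` B \<inter> space M = (Y -` A \<inter> space M) \<inter> (X -` B \<inter> space M)" by auto
  then have YXAB: "Y -` A \<inter> X -` B \<inter> space M \<in> sets M" using YA XB by auto
  have [measurable]: "a \<in> borel_measurable M" "c \<in> borel_measurable M" "ac \<in> borel_measurable M"
    unfolding a_def c_def ac_def using YA XB YXAB by simp_all
  have int_c: "integrable M c" and int_ac: "integrable M ac"
    unfolding c_def ac_def using XB YXAB by (simp_all add: integrable_indicator_iff less_top[symmetric])
  have "AE \<omega> in M. real_cond_exp M F ac \<omega> = real_cond_exp M F a \<omega> * real_cond_exp M F c \<omega>"
    using ci A B unfolding cond_indep_def F_def a_def c_def ac_def by blast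
  moreover have "AE \<omega> in M. real_cond_exp M F a \<omega> = real_cond_exp M G a \<omega>"
    using real_cond_exp_indicator_vimage[OF P Y sub_F, of A] real_cond_exp_indicator_vimage[OF P Y sub_G, of A] eq
    unfolding a_def by eventually_elim simp
  ultimately have F_to_G: "AE \<omega> in M. real_cond_exp M F ac \<omega> = real_cond_exp M G a \<omega> * real_cond_exp M F c \<omega>"
    by eventually_elim simp
  have "AE \<omega> in M. real_cond_exp M G (real_cond_exp M F ac) \<omega> = real_cond_exp M G ac \<omega>"
    by (rule G.real_cond_exp_nested_subalg[OF sub_F sub_GF int_ac])
  moreover have "AE \<omega> in M. real_cond_exp M G (real_cond_exp M F ac) \<omega>
      = real_cond_exp M G (\<lambda>\<omega>. real_cond_exp M G a \<omega> * real_cond_exp M F c \<omega>) \<omega>"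
    by (rule G.real_cond_exp_cong[OF F_to_G]) measurable
  moreover have "AE \<omega> in M. real_cond_exp M G (\<lambda>\<omega>. real_cond_exp M G a \<omega> * real_cond_exp M F c \<omega>) \<omega>
      = real_cond_exp M G a \<omega> * real_cond_exp M G (real_cond_exp M F c) \<omega>"
  proof (rule G.real_cond_exp_mult)
    have "integrable M (real_cond_exp M F ac)" by (rule F.real_cond_exp_int(1)[OF int_ac])
    then show "integrable M (\<lambda>\<omega>. real_cond_exp M G a \<omega> * real_cond_exp M F c \<omega>)"
      by (rule integrable_cong_AE_imp) (use F_to_G in measurable)
  qed measurable
  moreover have "AE \<omega> in M. real_cond_exp M G (real_cond_exp M F c) \<omega> = real_cond_exp M G c \<omega>"
    by (rule G.real_cond_exp_nested_subalg[OF sub_F sub_GF int_c])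
  ultimately have "AE \<omega> in M. real_cond_exp M G ac \<omega> = real_cond_exp M G a \<omega> * real_cond_exp M G c \<omega>"
    by eventually_elim simp
  then show "AE \<omega> in M. real_cond_exp M (vimage_algebra (space M) Z' NZ') (indicator (Y -` A \<inter> X -` B \<inter> space M)) \<omega>
      = real_cond_exp M (vimage_algebra (space M) Z' NZ') (indicator (Y -` A \<inter> space M)) \<omega>
        * real_cond_exp M (vimage_algebra (space M) Z' NZ') (indicator (X -` B \<inter> space M)) \<omega>"
    unfolding G_def a_def c_def ac_def .
qed

section \<open>Conditional entropy given a projection of \<open>X\<close>\<close>

abbreviation proj_algebra :: "'w measure \<Rightarrow> ('w \<Rightarrow> 'a::euclidean_space) \<Rightarrow> 'a set \<Rightarrow> 'w measure" where
  "proj_algebra M X S \<equiv> vimage_algebra (space M) (\<lambda>\<omega>. orth_proj S (X \<omega>)) borel"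

lemma subalgebra_proj_algebra:
  assumes "X \<in> borel_measurable M" "subspace S"
  shows "subalgebra M (proj_algebra M X S)"
  using measurable_comp[OF assms(1) borel_measurable_orth_proj[OF assms(2)]]
  by (intro subalgebra_vimage_algebra) (simp add: comp_def)

lemma subalgebra_proj_algebra_mono:
  fixes X :: "'w \<Rightarrow> 'a::euclidean_space"
  assumes S: "subspace S" and T: "subspace T" and "S \<subseteq> T"
  shows "subalgebra (proj_algebra M X T) (proj_algebra M X S)"
proof -
  have "(\<lambda>\<omega>. orth_proj S (orth_proj T (X \<omega>))) \<in> borel_measurable (proj_algebra M X T)"
    using measurable_comp[OF measurable_vimage_algebra1 borel_measurable_orth_proj[OF S]]
    by (simp add: comp_def)
  then have "(\<lambda>\<omega>. orth_proj S (X \<omega>)) \<in> borel_measurable (proj_algebra M X T)"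
    by (simp add: orth_proj_orth_proj[OF S T \<open>S \<subseteq> T\<close>])
  then show ?thesis
    unfolding subalgebra_def by (simp add: sets_image_in_sets)
qed

definition cond_entropy :: "'w measure \<Rightarrow> 'w measure \<Rightarrow> ('w \<Rightarrow> 'm::finite) \<Rightarrow> ennreal" where
  "cond_entropy M H Y = (\<integral>\<^sup>+ \<omega>. cross_entropy (cond_class_prob M H Y \<omega>) (cond_class_prob M H Y \<omega>) \<partial>M)"

lemma cond_entropy_finite:
  fixes Y :: "'w \<Rightarrow> 'm::finite"
  assumes P: "prob_space M" and Y: "Y \<in> M \<rightarrow>\<^sub>M count_space UNIV" and sub: "subalgebra M H"
  shows "cond_entropy M H Y < \<infinity>"
proof -
  interpret prob_space M by (rule P)
  have "AE \<omega> in M. cross_entropy (cond_class_prob M H Y \<omega>) (cond_class_prob M H Y \<omega>) \<le> of_nat CARD('m)"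
    using cond_class_prob_AE[OF P Y sub] by eventually_elim (simp add: entropy_le_card)
  then have "cond_entropy M H Y \<le> (\<integral>\<^sup>+ \<omega>. of_nat CARD('m) \<partial>M)"
    unfolding cond_entropy_def by (rule nn_integral_mono_AE)
  also have "\<dots> < \<infinity>" by (simp add: emeasure_space_1 of_nat_less_top)
  finally show ?thesis .
qed

text \<open>By the tower property \<open>E[H(p\<^sub>G)] = E[CE(p\<^sub>F, p\<^sub>G)] \<ge> E[H(p\<^sub>F)]\<close>, so the hypothesis forces
  equality in Gibbs' inequality almost everywhere.\<close>

lemma cond_class_prob_eq_if_cond_entropy_le:
  fixes Y :: "'w \<Rightarrow> 'm::finite"
  assumes P: "prob_space M" and Y: "Y \<in> M \<rightarrow>\<^sub>M count_space UNIV"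
    and sub_F: "subalgebra M F" and sub_GF: "subalgebra F G"
    and le: "cond_entropy M G Y \<le> cond_entropy M F Y"
  shows "AE \<omega> in M. cond_class_prob M F Y \<omega> = cond_class_prob M G Y \<omega>"
proof -
  interpret prob_space M by (rule P)
  have sub_G: "subalgebra M G" using sub_F sub_GF by (auto simp: subalgebra_def)
  define pF pG where "pF = cond_class_prob M F Y" and "pG = cond_class_prob M G Y"
  have [measurable]: "pF \<in> borel_measurable M" "pG \<in> borel_measurable M"
    unfolding pF_def pG_def
    by (intro measurable_from_subalg[OF sub_F] measurable_from_subalg[OF sub_G]
        borel_measurable_cond_class_prob)+
  have pG_F: "pG \<in> borel_measurable F"
    unfolding pG_def by (intro measurable_from_subalg[OF sub_GF] borel_measurable_cond_class_prob)
  have AE_simplex: "AE \<omega> in M. pF \<omega> \<in> prob_simplex \<and> pG \<omega> \<in> prob_simplex"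
    using cond_class_prob_AE[OF P Y sub_F] cond_class_prob_AE[OF P Y sub_G]
    unfolding pF_def pG_def by eventually_elim simp
  have AE_le: "AE \<omega> in M. cross_entropy (pF \<omega>) (pF \<omega>) \<le> cross_entropy (pF \<omega>) (pG \<omega>)"
    using AE_simplex by eventually_elim (simp add: entropy_le_cross_entropy)
  have "(\<integral>\<^sup>+ \<omega>. cross_entropy (pF \<omega>) (pG \<omega>) \<partial>M) = (\<integral>\<^sup>+ \<omega>. ce_loss (Y \<omega>) (pG \<omega>) \<partial>M)"
    unfolding pF_def using nn_integral_ce_loss_eq_cross_entropy[OF P Y sub_F pG_F] by simp
  also have "\<dots> = cond_entropy M G Y"
    unfolding cond_entropy_def pG_def
    by (rule nn_integral_ce_loss_eq_cross_entropy[OF P Y sub_G borel_measurable_cond_class_prob])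
  also have "\<dots> \<le> cond_entropy M F Y" by (rule le)
  finally have "(\<integral>\<^sup>+ \<omega>. cross_entropy (pF \<omega>) (pG \<omega>) \<partial>M) \<le> (\<integral>\<^sup>+ \<omega>. cross_entropy (pF \<omega>) (pF \<omega>) \<partial>M)"
    unfolding cond_entropy_def pF_def .
  moreover have fin: "(\<integral>\<^sup>+ \<omega>. cross_entropy (pF \<omega>) (pF \<omega>) \<partial>M) \<noteq> \<infinity>"
    using cond_entropy_finite[OF P Y sub_F] unfolding cond_entropy_def pF_def by simp
  ultimately have "(\<integral>\<^sup>+ \<omega>. cross_entropy (pF \<omega>) (pG \<omega>) - cross_entropy (pF \<omega>) (pF \<omega>) \<partial>M) = 0"
    using nn_integral_mono_AE[OF AE_le] by (subst nn_integral_diff[OF _ _ fin AE_le]) auto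
  then have "AE \<omega> in M. cross_entropy (pF \<omega>) (pG \<omega>) - cross_entropy (pF \<omega>) (pF \<omega>) = 0"
    by (subst (asm) nn_integral_0_iff_AE) auto
  then show ?thesis
    using AE_simplex unfolding pF_def[symmetric] pG_def[symmetric]
    by eventually_elim (auto intro: cross_entropy_le_entropy_imp_eq simp: diff_eq_0_iff_ennreal)
qed

section \<open>Risk of predictors based on the first coordinates of \<open>R\<close>\<close>

lemma Gd_full: "Gd n n = Gall n"
proof -
  have "r = r'" if "r \<in> space (Rspace n)" "r' \<in> space (Rspace n)" "\<forall>i<n. r i = r' i" for r r'
    using that by (intro PiE_ext[of r "{..<n}" "\<lambda>_. UNIV"]) (auto simp: space_PiM)
  then show ?thesis unfolding Gd_def by auto
qed

lemma Lrisk_padded_R: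
  fixes Y :: "'w \<Rightarrow> 'm::finite"
  assumes "d \<le> dmax"
  shows "Lrisk M Y (padded_R X b d dmax) dmax d = Lrisk M Y (padded_R X b d dmax) dmax dmax"
proof (rule antisym)
  let ?R = "padded_R X b d dmax"
  have "Gd dmax d \<subseteq> Gd dmax dmax" unfolding Gd_full by (auto simp: Gd_def)
  then show "Lrisk M Y ?R dmax dmax \<le> Lrisk M Y ?R dmax d"
    unfolding Lrisk_def by (rule INF_superset_mono) simp
  define trunc where "trunc r = restrict (\<lambda>i. if i < d then r i else (0::real)) {..<dmax}" for r :: "nat \<Rightarrow> real"
  have trunc_meas: "trunc \<in> Rspace dmax \<rightarrow>\<^sub>M Rspace dmax"
    unfolding trunc_def
  proof (rule measurable_restrict)
    fix i :: nat assume "i \<in> {..<dmax}"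
    then show "(\<lambda>r. if i < d then r i else 0) \<in> Rspace dmax \<rightarrow>\<^sub>M borel"
      using measurable_component_singleton[of i "{..<dmax}" "\<lambda>_. borel"] by (cases "i < d") auto
  qed
  have trunc_space: "trunc r \<in> space (Rspace dmax)" for r by (simp add: trunc_def space_PiM)
  have trunc_R: "trunc (?R \<omega>) = ?R \<omega>" for \<omega>
    unfolding trunc_def padded_R_def by (rule ext) (simp add: restrict_def)
  show "Lrisk M Y ?R dmax d \<le> Lrisk M Y ?R dmax dmax"
    unfolding Lrisk_def
  proof (rule INF_greatest)
    fix g :: "(nat \<Rightarrow> real) \<Rightarrow> real^'m" assume "g \<in> Gd dmax dmax"
    then have "g \<in> Rspace dmax \<rightarrow>\<^sub>M borel" "\<forall>r\<in>space (Rspace dmax). g r \<in> prob_simplex"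
      by (auto simp: Gd_full Gall_def)
    moreover have "g (trunc r) = g (trunc r')" if "\<forall>i<d. r i = r' i" for r r'
      unfolding trunc_def using that by (metis restrict_ext)
    ultimately have "(\<lambda>r. g (trunc r)) \<in> Gd dmax d"
      using measurable_comp[OF trunc_meas] trunc_space by (auto simp: Gd_def Gall_def comp_def)
    then have "(INF g\<in>Gd dmax d. \<integral>\<^sup>+ \<omega>. ce_loss (Y \<omega>) (g (?R \<omega>)) \<partial>M)
        \<le> (\<integral>\<^sup>+ \<omega>. ce_loss (Y \<omega>) (g (trunc (?R \<omega>))) \<partial>M)"
      by (rule INF_lower)
    then show "(INF g\<in>Gd dmax d. \<integral>\<^sup>+ \<omega>. ce_loss (Y \<omega>) (g (?R \<omega>)) \<partial>M)
        \<le> (\<integral>\<^sup>+ \<omega>. ce_loss (Y \<omega>) (g (?R \<omega>)) \<partial>M)"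
      by (simp add: trunc_R)
  qed
qed

text \<open>The Bayes predictor given \<open>P\<^sub>C X\<close> is a function of \<open>P\<^sub>C X\<close>, and \<open>P\<^sub>C X\<close> is a linear function of
  the first \<open>d\<close> coordinates of \<open>R\<close>.\<close>

lemma cond_class_prob_factor_padded_R:
  fixes M :: "'w measure" and X :: "'w \<Rightarrow> 'a::euclidean_space" and Y :: "'w \<Rightarrow> 'm::finite"
    and b :: "nat \<Rightarrow> 'a"
  assumes P: "prob_space M" and X: "X \<in> borel_measurable M" and Y: "Y \<in> M \<rightarrow>\<^sub>M count_space UNIV"
    and span: "span (b ` {..<d}) = C" and inj: "inj_on b {..<d}" and "d \<le> dmax"
  obtains g where "g \<in> Gall dmax"
    "AE \<omega> in M. g (padded_R X b d dmax \<omega>) = cond_class_prob M (proj_algebra M X C) Y \<omega>"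
proof -
  let ?p = "cond_class_prob M (proj_algebra M X C) Y"
  have sub_F: "subalgebra M (proj_algebra M X C)"
    using span by (metis subalgebra_proj_algebra[OF X] subspace_span)
  obtain \<phi> where \<phi>_meas: "\<phi> \<in> borel_measurable borel"
    and \<phi>_eq: "\<And>\<omega>. \<omega> \<in> space M \<Longrightarrow> ?p \<omega> = \<phi> (orth_proj C (X \<omega>))"
    by (rule cond_class_prob_vimage_factor[of "\<lambda>\<omega>. orth_proj C (X \<omega>)"]) auto
  obtain L where L_meas: "L \<in> borel_measurable (Rspace dmax)"
    and L_eq: "\<And>x r. (\<forall>i<d. r i = b i \<bullet> x) \<Longrightarrow> L r = orth_proj C x"
    using orth_proj_factor_inner[OF span inj \<open>d \<le> dmax\<close>] by blast
  define g where "g r = (if \<phi> (L r) \<in> prob_simplex then \<phi> (L r) else (\<chi> y::'m. 1 / real CARD('m)))" for r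
  have [measurable]: "prob_simplex \<in> sets (borel :: (real^'m) measure)"
    using closed_prob_simplex by (rule borel_closed)
  have "(\<lambda>r. \<phi> (L r)) \<in> borel_measurable (Rspace dmax)"
    using measurable_comp[OF L_meas \<phi>_meas] by (simp add: comp_def)
  then have "g \<in> borel_measurable (Rspace dmax)"
    unfolding g_def by measurable
  then have "g \<in> Gall dmax"
    unfolding Gall_def by (simp add: g_def uniform_in_prob_simplex)
  moreover have "AE \<omega> in M. g (padded_R X b d dmax \<omega>) = ?p \<omega>"
    using cond_class_prob_AE[OF P Y sub_F] AE_space
  proof eventually_elim
    case (elim \<omega>)
    have "L (padded_R X b d dmax \<omega>) = orth_proj C (X \<omega>)"
      using \<open>d \<le> dmax\<close> by (intro L_eq) (simp add: padded_R_def)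
    then show ?case unfolding g_def using elim \<phi>_eq by simp
  qed
  ultimately show ?thesis using that by blast
qed

lemma Lrisk_le_cond_entropy:
  fixes M :: "'w measure" and X :: "'w \<Rightarrow> 'a::euclidean_space" and Y :: "'w \<Rightarrow> 'm::finite"
    and b :: "nat \<Rightarrow> 'a"
  assumes P: "prob_space M" and X: "X \<in> borel_measurable M" and Y: "Y \<in> M \<rightarrow>\<^sub>M count_space UNIV"
    and span: "span (b ` {..<d}) = C" and inj: "inj_on b {..<d}" and dd: "d \<le> dmax"
  shows "Lrisk M Y (padded_R X b d dmax) dmax dmax \<le> cond_entropy M (proj_algebra M X C) Y"
proof -
  let ?R = "padded_R X b d dmax" and ?p = "cond_class_prob M (proj_algebra M X C) Y"
  have sub_F: "subalgebra M (proj_algebra M X C)"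
    using span by (metis subalgebra_proj_algebra[OF X] subspace_span)
  obtain g where g: "g \<in> Gall dmax" and g_eq: "AE \<omega> in M. g (?R \<omega>) = ?p \<omega>"
    using cond_class_prob_factor_padded_R[OF P X Y span inj dd] by blast
  have "Lrisk M Y ?R dmax dmax \<le> (\<integral>\<^sup>+ \<omega>. ce_loss (Y \<omega>) (g (?R \<omega>)) \<partial>M)"
    unfolding Lrisk_def using g by (intro INF_lower) (simp add: Gd_full)
  also have "\<dots> = (\<integral>\<^sup>+ \<omega>. ce_loss (Y \<omega>) (?p \<omega>) \<partial>M)"
    by (rule nn_integral_cong_AE) (use g_eq in auto)
  also have "\<dots> = cond_entropy M (proj_algebra M X C) Y"
    unfolding cond_entropy_def
    by (rule nn_integral_ce_loss_eq_cross_entropy[OF P Y sub_F borel_measurable_cond_class_prob])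
  finally show ?thesis .
qed

lemma padded_R_in_space: "padded_R X b d dmax \<omega> \<in> space (Rspace dmax)"
  by (simp add: padded_R_def space_PiM)

lemma measurable_Gd_padded_R:
  fixes X :: "'w \<Rightarrow> 'a::euclidean_space" and b :: "nat \<Rightarrow> 'a"
  assumes g: "g \<in> Gd dmax d'" and "d' \<le> d" "d \<le> dmax"
  shows "(\<lambda>\<omega>. g (padded_R X b d dmax \<omega>)) \<in> borel_measurable (proj_algebra M X (span (b ` {..<d'})))"
proof -
  let ?S = "span (b ` {..<d'})"
  define emb where "emb v = restrict (\<lambda>i. if i < d' then b i \<bullet> v else 0) {..<dmax}" for v :: 'a
  have g_meas: "g \<in> borel_measurable (Rspace dmax)"
    and g_eq: "\<forall>r\<in>space (Rspace dmax). \<forall>r'\<in>space (Rspace dmax). (\<forall>i<d'. r i = r' i) \<longrightarrow> g r = g r'"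
    using g unfolding Gd_def Gall_def by blast+
  have "emb \<in> borel \<rightarrow>\<^sub>M Rspace dmax"
    unfolding emb_def
  proof (rule measurable_restrict)
    fix i :: nat
    show "(\<lambda>v. if i < d' then b i \<bullet> v else 0) \<in> borel_measurable borel" by measurable
  qed
  then have g_emb: "(\<lambda>v. g (emb v)) \<in> borel_measurable borel"
    using measurable_comp[OF _ g_meas] by (simp add: comp_def)
  have "(\<lambda>\<omega>. g (emb (orth_proj ?S (X \<omega>)))) \<in> borel_measurable (proj_algebra M X ?S)"
    using measurable_comp[OF measurable_vimage_algebra1 g_emb, of "\<lambda>\<omega>. orth_proj ?S (X \<omega>)" "space M"]
    by (simp add: comp_def)
  moreover have "g (padded_R X b d dmax \<omega>) = g (emb (orth_proj ?S (X \<omega>)))" for \<omega>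
  proof (rule g_eq[rule_format])
    show "padded_R X b d dmax \<omega> \<in> space (Rspace dmax)" by (rule padded_R_in_space)
    show "emb (orth_proj ?S (X \<omega>)) \<in> space (Rspace dmax)" by (simp add: emb_def space_PiM)
    fix i assume "i < d'"
    then have "b i \<bullet> orth_proj ?S (X \<omega>) = b i \<bullet> X \<omega>"
      by (intro inner_orth_proj subspace_span span_base) simp
    then show "padded_R X b d dmax \<omega> i = emb (orth_proj ?S (X \<omega>)) i"
      using \<open>i < d'\<close> assms(2,3) by (simp add: padded_R_def emb_def)
  qed
  ultimately show ?thesis by simp
qed

lemma cond_entropy_le_Lrisk:
  fixes M :: "'w measure" and X :: "'w \<Rightarrow> 'a::euclidean_space" and Y :: "'w \<Rightarrow> 'm::finite"
    and b :: "nat \<Rightarrow> 'a"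
  assumes P: "prob_space M" and X: "X \<in> borel_measurable M" and Y: "Y \<in> M \<rightarrow>\<^sub>M count_space UNIV"
    and "d' \<le> d" "d \<le> dmax"
  shows "cond_entropy M (proj_algebra M X (span (b ` {..<d'}))) Y \<le> Lrisk M Y (padded_R X b d dmax) dmax d'"
  unfolding Lrisk_def
proof (rule INF_greatest)
  fix g :: "(nat \<Rightarrow> real) \<Rightarrow> real^'m" assume g: "g \<in> Gd dmax d'"
  let ?G = "proj_algebra M X (span (b ` {..<d'}))" and ?R = "padded_R X b d dmax"
  let ?p = "cond_class_prob M ?G Y"
  have sub_G: "subalgebra M ?G" by (intro subalgebra_proj_algebra[OF X] subspace_span)
  have "\<forall>r\<in>space (Rspace dmax). g r \<in> prob_simplex"
    using g unfolding Gd_def Gall_def by blast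
  then have g_simplex: "g (?R \<omega>) \<in> prob_simplex" for \<omega>
    using padded_R_in_space[of X b d dmax \<omega>] by blast
  have "AE \<omega> in M. cross_entropy (?p \<omega>) (?p \<omega>) \<le> cross_entropy (?p \<omega>) (g (?R \<omega>))"
    using cond_class_prob_AE[OF P Y sub_G]
    by eventually_elim (simp add: entropy_le_cross_entropy g_simplex)
  then have "cond_entropy M ?G Y \<le> (\<integral>\<^sup>+ \<omega>. cross_entropy (?p \<omega>) (g (?R \<omega>)) \<partial>M)"
    unfolding cond_entropy_def by (rule nn_integral_mono_AE)
  also have "\<dots> = (\<integral>\<^sup>+ \<omega>. ce_loss (Y \<omega>) (g (?R \<omega>)) \<partial>M)"
    using measurable_Gd_padded_R[OF g assms(4,5)]
    by (rule nn_integral_ce_loss_eq_cross_entropy[OF P Y sub_G, symmetric])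
  finally show "cond_entropy M ?G Y \<le> (\<integral>\<^sup>+ \<omega>. ce_loss (Y \<omega>) (g (?R \<omega>)) \<partial>M)" .
qed

lemma is_dr_subspace_if_Lrisk_eq:
  fixes M :: "'w measure" and X :: "'w \<Rightarrow> 'a::euclidean_space" and Y :: "'w \<Rightarrow> 'm::finite"
    and b :: "nat \<Rightarrow> 'a"
  assumes P: "prob_space M" and X: "X \<in> borel_measurable M" and Y: "Y \<in> M \<rightarrow>\<^sub>M count_space UNIV"
    and dr: "is_dr_subspace M X Y C"
    and span: "span (b ` {..<d}) = C" and inj: "inj_on b {..<d}" and d'd: "d' \<le> d" and dd: "d \<le> dmax"
    and eq: "Lrisk M Y (padded_R X b d dmax) dmax d' = Lrisk M Y (padded_R X b d dmax) dmax dmax"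
  shows "is_dr_subspace M X Y (span (b ` {..<d'}))"
proof -
  let ?S = "span (b ` {..<d'})"
  have C: "subspace C" and ci: "cond_indep M (count_space UNIV) Y borel X borel (\<lambda>\<omega>. orth_proj C (X \<omega>))"
    using dr by (simp_all add: is_dr_subspace_def)
  have "?S \<subseteq> C" using span d'd by (metis image_mono lessThan_subset_iff span_mono)
  then have sub_GF: "subalgebra (proj_algebra M X C) (proj_algebra M X ?S)"
    by (intro subalgebra_proj_algebra_mono C subspace_span)
  have sub_F: "subalgebra M (proj_algebra M X C)" by (rule subalgebra_proj_algebra[OF X C])
  have sub_G: "subalgebra M (proj_algebra M X ?S)" by (intro subalgebra_proj_algebra[OF X] subspace_span)
  have "cond_entropy M (proj_algebra M X ?S) Y \<le> Lrisk M Y (padded_R X b d dmax) dmax d'"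
    by (rule cond_entropy_le_Lrisk[OF P X Y d'd dd])
  also have "\<dots> \<le> cond_entropy M (proj_algebra M X C) Y"
    unfolding eq by (rule Lrisk_le_cond_entropy[OF P X Y span inj dd])
  finally have "AE \<omega> in M. cond_class_prob M (proj_algebra M X C) Y \<omega> = cond_class_prob M (proj_algebra M X ?S) Y \<omega>"
    by (rule cond_class_prob_eq_if_cond_entropy_le[OF P Y sub_F sub_GF])
  then have "cond_indep M (count_space UNIV) Y borel X borel (\<lambda>\<omega>. orth_proj ?S (X \<omega>))"
    by (rule cond_indep_coarsen[OF P Y X sub_F sub_G sub_GF _ ci])
  then show ?thesis by (simp add: is_dr_subspace_def)
qed

theorem propositionB5:
  fixes M :: "'w measure" and X :: "'w \<Rightarrow> real ^ 'p" and Y :: "'w \<Rightarrow> 'm::finite"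
    and b :: "nat \<Rightarrow> real ^ 'p" and dmax :: nat
  assumes "prob_space M"
    and "X \<in> borel_measurable M"
    and "Y \<in> M \<rightarrow>\<^sub>M count_space UNIV"
    and "is_dr_subspace M X Y (central_subspace M X Y)"
    and "inj_on b {..<dim (central_subspace M X Y)}"
    and "independent (b ` {..<dim (central_subspace M X Y)})"
    and "span (b ` {..<dim (central_subspace M X Y)}) = central_subspace M X Y"
    and "dim (central_subspace M X Y) \<le> dmax"
  shows "d_star M Y (padded_R X b (dim (central_subspace M X Y)) dmax) dmax
           = dim (central_subspace M X Y)"
proof -
  let ?C = "central_subspace M X Y"
  let ?R = "padded_R X b (dim ?C) dmax"
  have "dim ?C \<le> d'" if "Lrisk M Y ?R dmax d' = Lrisk M Y ?R dmax dmax" for d'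
  proof (rule ccontr)
    assume "\<not> dim ?C \<le> d'"
    then have "is_dr_subspace M X Y (span (b ` {..<d'}))"
      by (intro is_dr_subspace_if_Lrisk_eq[OF assms(1-4,7,5) _ assms(8) that]) simp
    then have "?C \<subseteq> span (b ` {..<d'})" unfolding central_subspace_def by blast
    then have "dim ?C \<le> card (b ` {..<d'})"
      by (metis dim_span dim_subset dim_le_card' finite_imageI finite_lessThan order_trans)
    also have "\<dots> \<le> d'" using card_image_le[of "{..<d'}" b] by simp
    finally show False using \<open>\<not> dim ?C \<le> d'\<close> by simp
  qed
  then show ?thesis
    unfolding d_star_def using Lrisk_padded_R[OF assms(8)] assms(8) by (intro Least_equality) auto
qed

end
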